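(* Let $\mathcal M$ and $\mathcal N$ be quantum channels that satisfy $s$-detailed balance with respect to $\rho_\beta$ (for a fixed $s\in[0,1]$). Suppose $\mathcal N$ has $\rho_\beta$ as its unique fixed point and its spectrum is contained in $[0,1]$. Then $\mathrm{gap}(\mathcal M\circ\mathcal N\circ\mathcal M)\ge \mathrm{gap}(\mathcal N)$.
   Context: Let $H$ be a Hermitian operator on $n$ qubits, $\beta>0$, $\rho_\beta=e^{-\beta H}/\operatorname{tr}(e^{-\beta H})$. A quantum channel is a CPTP map $\mathcal T(X)=\sum_uK_uXK_u^\dagger$ with dual $\mathcal T^\dagger(X)=\sum_uK_u^\dagger XK_u$ (the adjoint w.r.t. $\operatorname{tr}(A^\dagger B)$). For $s\in[0,1]$, $\langle A,B\rangle_s=\operatorname{tr}(A^\dagger\rho_\beta^{1-s}B\rho_\beta^s)$. A map $\mathcal T$ satisfies $s$-detailed balance w.r.t. $\rho_\beta$ if $\langle A,\mathcal T^\dagger(B)\rangle_s=\langle\mathcal T^\dagger(A),B\rangle_s$ for all matrices $A,B$. Spectrum means the set of eigenvalues of the channel as a linear map on matrices. For a channel $\mathcal T$ satisfying $s$-detailed balance, $\mathrm{gap}(\mathcal T):=1-\max_{X\ne0,\ \langle X,I\rangle_s=0}\frac{\langle X,\mathcal T^\dagger(X)\rangle_s}{\langle X,X\rangle_s}$. *)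

theory Defs
  imports "HOL-Analysis.Analysis"
begin

type_synonym 'd cmat = "complex^'d^'d"

definition cadj :: "'d::finite cmat \<Rightarrow> 'd cmat" where
  "cadj A = (\<chi> i j. cnj (A $ j $ i))"

definition csmult :: "complex \<Rightarrow> 'd::finite cmat \<Rightarrow> 'd cmat" where
  "csmult c A = (\<chi> i j. c * A $ i $ j)"

definition hermitian :: "'d::finite cmat \<Rightarrow> bool" where
  "hermitian A \<longleftrightarrow> cadj A = A"

primrec mpow :: "'d::finite cmat \<Rightarrow> nat \<Rightarrow> 'd cmat" where
  "mpow A 0 = mat 1"
| "mpow A (Suc k) = A ** mpow A k"

definition mexp :: "'d::finite cmat \<Rightarrow> 'd cmat" where
  "mexp A = (\<Sum>k. csmult (of_real (1 / fact k)) (mpow A k))"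

definition partition_fn :: "'d::finite cmat \<Rightarrow> real \<Rightarrow> complex" where
  "partition_fn H \<beta> = trace (mexp (csmult (of_real (- \<beta>)) H))"

definition gibbs :: "'d::finite cmat \<Rightarrow> real \<Rightarrow> 'd cmat" where
  "gibbs H \<beta> = csmult (1 / partition_fn H \<beta>) (mexp (csmult (of_real (- \<beta>)) H))"

text \<open>Real power rho_beta^t of the Gibbs state (t real):
  rho_beta^t = e^{-t beta H} / tr(e^{-beta H})^t, computed via the spectral calculus
  (partition_fn is a positive real number for Hermitian H).\<close>

definition gibbs_pow :: "'d::finite cmat \<Rightarrow> real \<Rightarrow> real \<Rightarrow> 'd cmat" where
  "gibbs_pow H \<beta> t =
     csmult (of_real (1 / (Re (partition_fn H \<beta>)) powr t))
            (mexp (csmult (of_real (- t * \<beta>)) H))"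

definition kraus_map :: "'d::finite cmat list \<Rightarrow> 'd cmat \<Rightarrow> 'd cmat" where
  "kraus_map Ks X = (\<Sum>K\<leftarrow>Ks. K ** X ** cadj K)"

definition quantum_channel :: "('d::finite cmat \<Rightarrow> 'd cmat) \<Rightarrow> bool" where
  "quantum_channel T \<longleftrightarrow>
     (\<exists>Ks. T = kraus_map Ks \<and> (\<Sum>K\<leftarrow>Ks. cadj K ** K) = mat 1)"

definition hs_inner :: "'d::finite cmat \<Rightarrow> 'd cmat \<Rightarrow> complex" where
  "hs_inner A B = trace (cadj A ** B)"

definition dual :: "('d::finite cmat \<Rightarrow> 'd cmat) \<Rightarrow> ('d cmat \<Rightarrow> 'd cmat)" where
  "dual T = (THE S. \<forall>A B. hs_inner A (T B) = hs_inner (S A) B)"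

definition s_inner :: "'d::finite cmat \<Rightarrow> real \<Rightarrow> real \<Rightarrow> 'd cmat \<Rightarrow> 'd cmat \<Rightarrow> complex" where
  "s_inner H \<beta> s A B =
     trace (cadj A ** gibbs_pow H \<beta> (1 - s) ** B ** gibbs_pow H \<beta> s)"

definition detailed_balance ::
  "'d::finite cmat \<Rightarrow> real \<Rightarrow> real \<Rightarrow> ('d cmat \<Rightarrow> 'd cmat) \<Rightarrow> bool" where
  "detailed_balance H \<beta> s T \<longleftrightarrow>
     (\<forall>A B. s_inner H \<beta> s A (dual T B) = s_inner H \<beta> s (dual T A) B)"

definition spectrum_map :: "('d::finite cmat \<Rightarrow> 'd cmat) \<Rightarrow> complex set" where
  "spectrum_map T = {c. \<exists>X. X \<noteq> 0 \<and> T X = csmult c X}"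

definition density_matrix :: "'d::finite cmat \<Rightarrow> bool" where
  "density_matrix \<sigma> \<longleftrightarrow> hermitian \<sigma> \<and> trace \<sigma> = 1 \<and>
     (\<forall>v. 0 \<le> Re (\<Sum>i\<in>UNIV. \<Sum>j\<in>UNIV. cnj (v $ i) * \<sigma> $ i $ j * v $ j))"

definition unique_fixed_point :: "('d::finite cmat \<Rightarrow> 'd cmat) \<Rightarrow> 'd cmat \<Rightarrow> bool" where
  "unique_fixed_point T \<rho> \<longleftrightarrow> T \<rho> = \<rho> \<and>
     (\<forall>\<sigma>. density_matrix \<sigma> \<and> T \<sigma> = \<sigma> \<longrightarrow> \<sigma> = \<rho>)"

text \<open>The quotient is real under detailed balance; we take its real part.
  The maximum is rendered as a supremum (it is attained).\<close>

definition gap :: "'d::finite cmat \<Rightarrow> real \<Rightarrow> real \<Rightarrow> ('d cmat \<Rightarrow> 'd cmat) \<Rightarrow> real" where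
  "gap H \<beta> s T = 1 - Sup {Re (s_inner H \<beta> s X (dual T X) / s_inner H \<beta> s X X) | X.
                              X \<noteq> 0 \<and> s_inner H \<beta> s X (mat 1) = 0}"

end

theory Submission
  imports Defs
begin

text \<open>Conjugation by \<open>\<rho>\<^bsup>(1-s)/2\<^esup> \<cdot> \<rho>\<^bsup>s/2\<^esup>\<close> turns \<open>\<langle>_, _\<rangle>\<^sub>s\<close> into a
  multiple of the Hilbert--Schmidt inner product. Under it the duals of the detailed-balanced
  channels become symmetric operators on a Euclidean space, preserving the real orthogonal
  complement \<open>W\<close> of the identity. The dual of a channel is unital and completely positive, so it
  does not increase the operator norm; its powers are therefore bounded, and a symmetric
  power-bounded operator is a contraction. Let \<open>\<mu>\<close> be the largest eigenvalue of \<open>\<N>\<^sup>\<dagger>\<close> on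
  \<open>W\<close>, which is nonnegative because the spectrum of \<open>\<N>\<close> lies in \<open>[0, 1]\<close>. Then
  \<open>\<langle>v, \<M>\<^sup>\<dagger>\<N>\<^sup>\<dagger>\<M>\<^sup>\<dagger> v\<rangle> = \<langle>\<M>\<^sup>\<dagger> v, \<N>\<^sup>\<dagger>\<M>\<^sup>\<dagger> v\<rangle> \<le> \<mu> \<parallel>\<M>\<^sup>\<dagger> v\<parallel>\<^sup>2 \<le> \<mu> \<parallel>v\<parallel>\<^sup>2\<close>,
  so no Rayleigh quotient of \<open>\<M> \<circ> \<N> \<circ> \<M>\<close> on \<open>W\<close> exceeds the largest one of \<open>\<N>\<close>.\<close>

section \<open>Matrix algebra\<close>

lemma cadj_nth [simp]: "cadj A $ i $ j = cnj (A $ j $ i)"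
  by (simp add: cadj_def)

lemma csmult_nth [simp]: "csmult c A $ i $ j = c * A $ i $ j"
  by (simp add: csmult_def)

lemma matrix_mult_nth: "(A ** B) $ i $ j = (\<Sum>k\<in>UNIV. A $ i $ k * B $ k $ j)"
  by (simp add: matrix_matrix_mult_def)

lemma cadj_cadj [simp]: "cadj (cadj A) = A"
  by (simp add: vec_eq_iff)

lemma cadj_mult: "cadj (A ** B) = cadj B ** cadj A"
  by (simp add: vec_eq_iff matrix_mult_nth mult.commute)

lemma cadj_mat_1 [simp]: "cadj (mat 1 :: 'd::finite cmat) = mat 1"
  by (simp add: vec_eq_iff mat_def)

lemma csmult_mult_left: "csmult c A ** B = csmult c (A ** B)"
  by (simp add: vec_eq_iff matrix_mult_nth sum_distrib_left mult.assoc)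

lemma csmult_mult_right: "A ** csmult c B = csmult c (A ** B)"
  by (simp add: vec_eq_iff matrix_mult_nth sum_distrib_left mult.left_commute)

lemma csmult_csmult [simp]: "csmult a (csmult b A) = csmult (a * b) A"
  by (simp add: vec_eq_iff mult.assoc)

lemma csmult_one [simp]: "csmult 1 A = A"
  by (simp add: vec_eq_iff)

lemma csmult_zero [simp]: "csmult c 0 = 0"
  by (simp add: vec_eq_iff)

lemma csmult_add: "csmult c (A + B) = csmult c A + csmult c B"
  by (simp add: vec_eq_iff algebra_simps)

lemma csmult_scaleR: "csmult c (r *\<^sub>R A) = r *\<^sub>R csmult c A"
  by (simp add: vec_eq_iff)

lemma csmult_of_real: "csmult (of_real r) A = r *\<^sub>R A"
  by (simp add: vec_eq_iff complex_eq_iff)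

lemma trace_csmult: "trace (csmult c A) = c * trace A"
  by (simp add: trace_def sum_distrib_left)

lemma matrix_add_rdistrib: "(A + B) ** (C :: 'a::semiring_1^'n^'m) = A ** C + B ** C"
  by (simp add: vec_eq_iff matrix_matrix_mult_def algebra_simps sum.distrib)

lemma mat_1_neq_0: "(mat 1 :: 'a::zero_neq_one^'n^'n) \<noteq> 0"
  by (auto simp: vec_eq_iff mat_def)

section \<open>The Hilbert--Schmidt inner product\<close>

lemma hs_inner_sum: "hs_inner A B = (\<Sum>i\<in>UNIV. \<Sum>j\<in>UNIV. cnj (A $ i $ j) * B $ i $ j)"
  unfolding hs_inner_def trace_def by (simp add: matrix_mult_nth) (rule sum.swap)

lemma Re_hs_inner: "Re (hs_inner A B) = inner A B"
  unfolding hs_inner_sum inner_vec_def inner_complex_def Re_sum by simp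

lemma hs_inner_self: "hs_inner A A = of_real ((norm A)\<^sup>2)"
proof -
  have "hs_inner A A = (\<Sum>i\<in>UNIV. \<Sum>j\<in>UNIV. of_real ((cmod (A $ i $ j))\<^sup>2))"
    unfolding hs_inner_sum by (intro sum.cong refl) (metis complex_norm_square mult.commute)
  also have "\<dots> = of_real ((norm A)\<^sup>2)"
    by (simp add: norm_vec_def L2_set_def sum_nonneg)
  finally show ?thesis .
qed

lemma hs_inner_self_eq_0 [simp]: "hs_inner A A = 0 \<longleftrightarrow> A = 0"
  by (simp add: hs_inner_self)

lemma hs_inner_zero [simp]: "hs_inner 0 A = 0" "hs_inner A 0 = 0"
  by (simp_all add: hs_inner_sum)

lemma hs_inner_add_left: "hs_inner (A + B) C = hs_inner A C + hs_inner B C"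
  by (simp add: hs_inner_sum algebra_simps sum.distrib)

lemma hs_inner_add_right: "hs_inner A (B + C) = hs_inner A B + hs_inner A C"
  by (simp add: hs_inner_sum algebra_simps sum.distrib)

lemma hs_inner_diff_left: "hs_inner (A - B) C = hs_inner A C - hs_inner B C"
  by (simp add: hs_inner_sum algebra_simps sum_subtractf)

lemma hs_inner_diff_right: "hs_inner A (B - C) = hs_inner A B - hs_inner A C"
  by (simp add: hs_inner_sum algebra_simps sum_subtractf)

lemma hs_inner_csmult_left: "hs_inner (csmult c A) B = cnj c * hs_inner A B"
  by (simp add: hs_inner_sum sum_distrib_left algebra_simps)

lemma hs_inner_csmult_right: "hs_inner A (csmult c B) = c * hs_inner A B"
  by (simp add: hs_inner_sum sum_distrib_left algebra_simps)

lemma hs_inner_mult_right: "hs_inner A (B ** C) = hs_inner (A ** cadj C) B"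
  unfolding hs_inner_def by (metis cadj_mult cadj_cadj matrix_mul_assoc trace_mul_sym)

lemma hs_inner_mult_left: "hs_inner A (B ** C) = hs_inner (cadj B ** A) C"
  unfolding hs_inner_def by (metis cadj_mult cadj_cadj matrix_mul_assoc)

lemma hs_inner_cancel_left:
  assumes "\<And>B. hs_inner A B = hs_inner A' B"
  shows "A = A'"
proof -
  have "hs_inner (A - A') (A - A') = 0"
    using assms[of "A - A'"] by (simp add: hs_inner_diff_left)
  then show ?thesis
    by simp
qed

section \<open>Kraus maps and their duals\<close>

lemma kraus_map_Nil [simp]: "kraus_map [] X = 0"
  by (simp add: kraus_map_def)

lemma kraus_map_Cons [simp]: "kraus_map (K # Ks) X = K ** X ** cadj K + kraus_map Ks X"
  by (simp add: kraus_map_def)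

lemma hs_inner_kraus_map:
  "hs_inner A (kraus_map Ks B) = hs_inner (kraus_map (map cadj Ks) A) B"
proof (induction Ks)
  case Nil
  then show ?case by simp
next
  case (Cons K Ks)
  have "hs_inner A (K ** B ** cadj K) = hs_inner (A ** K) (K ** B)"
    using hs_inner_mult_right[of A "K ** B" "cadj K"] by simp
  also have "\<dots> = hs_inner (cadj K ** A ** K) B"
    using hs_inner_mult_left[of "A ** K" K B] by (simp add: matrix_mul_assoc)
  finally have "hs_inner A (K ** B ** cadj K) = hs_inner (cadj K ** A ** K) B" .
  with Cons show ?case by (simp add: hs_inner_add_right hs_inner_add_left)
qed

lemma dual_eqI:
  assumes "\<And>A B. hs_inner A (T B) = hs_inner (S A) B"
  shows "dual T = S"
  unfolding dual_def
proof (rule the_equality)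
  fix S' assume S': "\<forall>A B. hs_inner A (T B) = hs_inner (S' A) B"
  show "S' = S"
  proof
    fix A
    show "S' A = S A"
      by (rule hs_inner_cancel_left) (metis S' assms)
  qed
qed (use assms in blast)

lemma dual_kraus_map: "dual (kraus_map Ks) = kraus_map (map cadj Ks)"
  by (rule dual_eqI) (rule hs_inner_kraus_map)

lemma kraus_map_add: "kraus_map Ks (X + Y) = kraus_map Ks X + kraus_map Ks Y"
  by (induction Ks) (simp_all add: matrix_add_ldistrib matrix_add_rdistrib algebra_simps)

lemma kraus_map_scaleR: "kraus_map Ks (r *\<^sub>R X) = r *\<^sub>R kraus_map Ks X"
  by (induction Ks)
    (simp_all add: scalar_matrix_assoc[symmetric] matrix_scalar_ac scaleR_add_right)

lemma kraus_map_csmult: "kraus_map Ks (csmult c X) = csmult c (kraus_map Ks X)"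
  by (induction Ks) (simp_all add: csmult_mult_left csmult_mult_right csmult_add)

lemma linear_kraus_map: "linear (kraus_map Ks)"
  by (rule linearI) (simp_all add: kraus_map_add kraus_map_scaleR)

lemma kraus_map_adjoints_unital:
  assumes "(\<Sum>K\<leftarrow>Ks. cadj K ** K) = mat 1"
  shows "kraus_map (map cadj Ks) (mat 1) = mat 1"
proof -
  have "kraus_map (map cadj Ks) (mat 1) = (\<Sum>K\<leftarrow>Ks. cadj K ** K)"
    by (induction Ks) simp_all
  with assms show ?thesis by simp
qed

lemma quantum_channel_dual:
  assumes "quantum_channel T"
  obtains Ks where "T = kraus_map Ks" "dual T = kraus_map (map cadj Ks)"
    "(\<Sum>K\<leftarrow>Ks. cadj K ** K) = mat 1"
  using assms unfolding quantum_channel_def by (auto simp: dual_kraus_map)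

lemma hs_inner_dual:
  assumes "quantum_channel T"
  shows "hs_inner A (T B) = hs_inner (dual T A) B"
proof -
  obtain Ks where "T = kraus_map Ks" "dual T = kraus_map (map cadj Ks)"
    using quantum_channel_dual[OF assms] by blast
  then show ?thesis
    by (simp add: hs_inner_kraus_map)
qed

lemma dual_comp3:
  assumes "quantum_channel M" "quantum_channel N"
  shows "dual (M \<circ> N \<circ> M) = dual M \<circ> dual N \<circ> dual M"
  by (rule dual_eqI) (simp add: hs_inner_dual[OF assms(1)] hs_inner_dual[OF assms(2)])

text \<open>Otherwise \<open>T - cnj c\<close> would be injective, hence surjective, and \<open>X\<close> would be
  orthogonal to its range.\<close>

lemma cnj_in_spectrum_map_if_dual_eigenvector:
  assumes T: "quantum_channel T" and eigen: "dual T X = csmult c X" and "X \<noteq> 0"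
  shows "cnj c \<in> spectrum_map T"
proof (rule ccontr)
  assume not_eigenvalue: "cnj c \<notin> spectrum_map T"
  obtain Ks where T_eq: "T = kraus_map Ks"
    using T quantum_channel_dual by blast
  define D where "D Y = T Y - csmult (cnj c) Y" for Y
  have "linear D"
    unfolding D_def T_eq
    by (rule linearI) (simp_all add: kraus_map_add kraus_map_scaleR csmult_add csmult_scaleR
        scaleR_diff_right)
  moreover have "inj D"
  proof (rule injI)
    fix Y Y' assume "D Y = D Y'"
    then have "D (Y - Y') = 0"
      using linear_diff[OF \<open>linear D\<close>] by simp
    then have "T (Y - Y') = csmult (cnj c) (Y - Y')"
      by (simp add: D_def)
    then have "Y - Y' = 0"
      using not_eigenvalue unfolding spectrum_map_def by blast
    then show "Y = Y'"
      by simp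
  qed
  ultimately have "surj D"
    by (simp add: linear_injective_imp_surjective)
  then obtain B where "D B = X"
    by (metis surjE)
  then have "hs_inner X X = hs_inner X (T B - csmult (cnj c) B)"
    by (simp add: D_def)
  also have "\<dots> = hs_inner (dual T X) B - cnj c * hs_inner X B"
    by (simp add: hs_inner_diff_right hs_inner_csmult_right hs_inner_dual[OF T])
  also have "\<dots> = 0"
    by (simp add: eigen hs_inner_csmult_left)
  finally show False
    using \<open>X \<noteq> 0\<close> by simp
qed

section \<open>The exponential of a matrix\<close>

lemma mpow_csmult: "mpow (csmult a H) k = csmult (a ^ k) (mpow H k)"
  by (induction k) (simp_all add: csmult_mult_left csmult_mult_right mult.commute)

lemma mpow_add: "mpow H (i + j) = mpow H i ** mpow H j"
  by (induction i) (simp_all add: matrix_mul_assoc)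

lemma cadj_mpow: "hermitian H \<Longrightarrow> cadj (mpow H k) = mpow H k"
proof (induction k)
  case (Suc k)
  have "mpow H k ** H = H ** mpow H k"
    using mpow_add[of H k 1] mpow_add[of H 1 k] by (simp add: add.commute)
  with Suc show ?case
    by (simp add: cadj_mult hermitian_def)
qed simp

definition entrywise_l1 :: "'d::finite cmat \<Rightarrow> real" where
  "entrywise_l1 A = (\<Sum>i\<in>UNIV. \<Sum>j\<in>UNIV. cmod (A $ i $ j))"

lemma entrywise_l1_nonneg: "0 \<le> entrywise_l1 A"
  unfolding entrywise_l1_def by (intro sum_nonneg) auto

lemma mpow_nth_bound: "cmod (mpow H k $ i $ j) \<le> entrywise_l1 H ^ k"
proof (induction k arbitrary: i j)
  case 0
  then show ?case by (simp add: mat_def)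
next
  case (Suc k)
  have "cmod (mpow H (Suc k) $ i $ j) \<le> (\<Sum>l\<in>UNIV. cmod (H $ i $ l) * cmod (mpow H k $ l $ j))"
    unfolding mpow.simps matrix_mult_nth by (rule order_trans[OF norm_sum]) (simp add: norm_mult)
  also have "\<dots> \<le> (\<Sum>l\<in>UNIV. cmod (H $ i $ l)) * entrywise_l1 H ^ k"
    unfolding sum_distrib_right by (intro sum_mono mult_left_mono Suc.IH) auto
  also have "\<dots> \<le> entrywise_l1 H * entrywise_l1 H ^ k"
  proof (rule mult_right_mono)
    show "(\<Sum>l\<in>UNIV. cmod (H $ i $ l)) \<le> entrywise_l1 H"
      unfolding entrywise_l1_def
      by (rule member_le_sum[where f = "\<lambda>i. \<Sum>l\<in>UNIV. cmod (H $ i $ l)"]) (auto intro: sum_nonneg)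
  qed (simp add: entrywise_l1_nonneg)
  finally show ?case by simp
qed

definition mexp_term :: "complex \<Rightarrow> 'd::finite cmat \<Rightarrow> 'd \<Rightarrow> 'd \<Rightarrow> nat \<Rightarrow> complex" where
  "mexp_term a H i j k = a ^ k / fact k * mpow H k $ i $ j"

lemma summable_norm_mexp_term: "summable (\<lambda>k. norm (mexp_term a H i j k))"
proof (rule summable_comparison_test)
  show "summable (\<lambda>k. inverse (fact k) * (cmod a * entrywise_l1 H) ^ k)"
    by (rule summable_exp)
  show "\<exists>N. \<forall>k\<ge>N. norm (norm (mexp_term a H i j k))
      \<le> inverse (fact k) * (cmod a * entrywise_l1 H) ^ k"
  proof (intro exI allI impI)
    fix k
    have "norm (norm (mexp_term a H i j k)) = cmod a ^ k / fact k * cmod (mpow H k $ i $ j)"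
      by (simp add: mexp_term_def norm_mult norm_divide norm_power)
    also have "\<dots> \<le> cmod a ^ k / fact k * entrywise_l1 H ^ k"
      by (intro mult_left_mono mpow_nth_bound) auto
    also have "\<dots> = inverse (fact k) * (cmod a * entrywise_l1 H) ^ k"
      by (simp add: power_mult_distrib divide_inverse)
    finally show "norm (norm (mexp_term a H i j k))
        \<le> inverse (fact k) * (cmod a * entrywise_l1 H) ^ k" .
  qed
qed

lemma mexp_term_sums: "mexp_term a H i j sums (mexp (csmult a H) $ i $ j)"
proof -
  have summable: "summable (mexp_term a H i j)" for i j
    using summable_norm_mexp_term summable_norm_cancel by blast
  have "(\<lambda>k. csmult (of_real (1 / fact k)) (mpow (csmult a H) k)) sums
      (\<chi> i j. suminf (mexp_term a H i j))"
    unfolding sums_def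
  proof (intro vec_tendstoI)
    fix i j
    have "(\<lambda>n. (\<Sum>k<n. csmult (of_real (1 / fact k)) (mpow (csmult a H) k)) $ i $ j)
        = (\<lambda>n. \<Sum>k<n. mexp_term a H i j k)"
      by (simp add: mpow_csmult mexp_term_def)
    moreover have "(\<lambda>n. \<Sum>k<n. mexp_term a H i j k) \<longlonglongrightarrow> suminf (mexp_term a H i j)"
      using summable summable_LIMSEQ by blast
    ultimately show "((\<lambda>n. (\<Sum>k<n. csmult (of_real (1 / fact k)) (mpow (csmult a H) k)) $ i $ j)
        \<longlongrightarrow> (\<chi> i j. suminf (mexp_term a H i j)) $ i $ j) sequentially"
      by simp
  qed
  then have "mexp (csmult a H) $ i $ j = suminf (mexp_term a H i j)"
    unfolding mexp_def by (simp add: sums_iff)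
  with summable show ?thesis
    by (simp add: summable_sums)
qed

lemma binomial_ring_div_fact:
  fixes a b :: "'a::field_char_0"
  shows "(a + b) ^ k / fact k = (\<Sum>p\<le>k. a ^ p / fact p * (b ^ (k - p) / fact (k - p)))"
proof -
  have "(a + b) ^ k / fact k = (\<Sum>p\<le>k. of_nat (k choose p) * a ^ p * b ^ (k - p) / fact k)"
    by (simp add: binomial_ring sum_divide_distrib)
  also have "\<dots> = (\<Sum>p\<le>k. a ^ p / fact p * (b ^ (k - p) / fact (k - p)))"
  proof (rule sum.cong[OF refl])
    fix p assume "p \<in> {..k}"
    then have "(of_nat (k choose p) :: 'a) = fact k / (fact p * fact (k - p))"
      using binomial_fact[of p k] by simp
    then show "of_nat (k choose p) * a ^ p * b ^ (k - p) / fact k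
        = a ^ p / fact p * (b ^ (k - p) / fact (k - p))"
      by (simp add: field_simps)
  qed
  finally show ?thesis .
qed

lemma mexp_term_convolution:
  "(\<Sum>m\<in>UNIV. \<Sum>p\<le>k. mexp_term a H i m p * mexp_term b H m j (k - p)) = mexp_term (a + b) H i j k"
proof -
  have "(\<Sum>m\<in>UNIV. \<Sum>p\<le>k. mexp_term a H i m p * mexp_term b H m j (k - p))
      = (\<Sum>p\<le>k. a ^ p / fact p * (b ^ (k - p) / fact (k - p)) *
           (\<Sum>m\<in>UNIV. mpow H p $ i $ m * mpow H (k - p) $ m $ j))"
    by (subst sum.swap) (simp add: mexp_term_def sum_distrib_left mult_ac)
  also have "\<dots> = (\<Sum>p\<le>k. a ^ p / fact p * (b ^ (k - p) / fact (k - p)) * mpow H k $ i $ j)"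
  proof (rule sum.cong[OF refl])
    fix p assume "p \<in> {..k}"
    then have "mpow H k = mpow H p ** mpow H (k - p)"
      using mpow_add[of H p "k - p"] by simp
    then show "a ^ p / fact p * (b ^ (k - p) / fact (k - p)) *
          (\<Sum>m\<in>UNIV. mpow H p $ i $ m * mpow H (k - p) $ m $ j)
        = a ^ p / fact p * (b ^ (k - p) / fact (k - p)) * mpow H k $ i $ j"
      by (simp add: matrix_mult_nth)
  qed
  also have "\<dots> = mexp_term (a + b) H i j k"
    by (simp add: mexp_term_def binomial_ring_div_fact sum_distrib_right)
  finally show ?thesis .
qed

lemma mexp_csmult_add: "mexp (csmult a H) ** mexp (csmult b H) = mexp (csmult (a + b) H)"
proof -
  have "(\<lambda>k. \<Sum>m\<in>UNIV. \<Sum>p\<le>k. mexp_term a H i m p * mexp_term b H m j (k - p)) sums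
      ((mexp (csmult a H) ** mexp (csmult b H)) $ i $ j)" for i j
    unfolding matrix_mult_nth
  proof (rule sums_sum)
    fix m
    show "(\<lambda>k. \<Sum>p\<le>k. mexp_term a H i m p * mexp_term b H m j (k - p)) sums
        (mexp (csmult a H) $ i $ m * mexp (csmult b H) $ m $ j)"
      using Cauchy_product_sums[OF summable_norm_mexp_term summable_norm_mexp_term]
      by (simp add: sums_unique[OF mexp_term_sums, symmetric])
  qed
  then have "mexp_term (a + b) H i j sums ((mexp (csmult a H) ** mexp (csmult b H)) $ i $ j)"
    for i j
    by (simp add: mexp_term_convolution)
  then show ?thesis
    using mexp_term_sums sums_unique2 by (blast intro: vec_eq_iff[THEN iffD2])
qed

lemma mexp_csmult_0: "mexp (csmult 0 H) = mat 1"
proof -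
  have "mexp (csmult 0 H) $ i $ j = mat 1 $ i $ j" for i j
  proof -
    have "(\<lambda>k. mpow H k $ i $ j / fact k * 0 ^ k) sums (mpow H 0 $ i $ j / fact 0)"
      by (rule powser_sums_zero)
    moreover have "(\<lambda>k. mpow H k $ i $ j / fact k * 0 ^ k) = mexp_term 0 H i j"
      by (auto simp: mexp_term_def fun_eq_iff)
    ultimately have "mexp_term 0 H i j sums (mat 1 $ i $ j)"
      by simp
    then show ?thesis
      using mexp_term_sums sums_unique2 by blast
  qed
  then show ?thesis
    by (simp add: vec_eq_iff)
qed

lemma cadj_mexp_of_real:
  assumes "hermitian H"
  shows "cadj (mexp (csmult (of_real r) H)) = mexp (csmult (of_real r) H)"
proof -
  have "cnj (mexp (csmult (of_real r) H) $ j $ i) = mexp (csmult (of_real r) H) $ i $ j" for i j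
  proof -
    have "(\<lambda>k. cnj (mexp_term (of_real r) H j i k)) sums cnj (mexp (csmult (of_real r) H) $ j $ i)"
      using mexp_term_sums sums_cnj by blast
    moreover have "(\<lambda>k. cnj (mexp_term (of_real r) H j i k)) = mexp_term (of_real r) H i j"
    proof
      fix k
      have "cnj (mpow H k $ j $ i) = mpow H k $ i $ j"
        using cadj_mpow[OF assms, of k] by (metis cadj_nth)
      then show "cnj (mexp_term (of_real r) H j i k) = mexp_term (of_real r) H i j k"
        by (simp add: mexp_term_def)
    qed
    ultimately show ?thesis
      using mexp_term_sums sums_unique2 by metis
  qed
  then show ?thesis
    by (simp add: vec_eq_iff)
qed

section \<open>Duals of channels do not increase the operator norm\<close>

definition op_norm_le :: "'d::finite cmat \<Rightarrow> real \<Rightarrow> bool" where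
  "op_norm_le A c \<longleftrightarrow> (\<forall>v. norm (A *v v) \<le> c * norm v)"

lemma inner_complex_vec: "inner x y = Re (\<Sum>i\<in>UNIV. cnj (x $ i) * (y :: complex^'d::finite) $ i)"
  by (simp add: inner_vec_def inner_complex_def Re_sum)

lemma inner_cadj_mult_vec: "inner w (cadj K *v z) = inner (K *v w) (z :: complex^'d::finite)"
proof -
  have "(\<Sum>i\<in>UNIV. cnj (w $ i) * (\<Sum>j\<in>UNIV. cnj (K $ j $ i) * z $ j))
      = (\<Sum>j\<in>UNIV. cnj (\<Sum>i\<in>UNIV. K $ j $ i * w $ i) * z $ j)"
    by (simp add: sum_distrib_left sum_distrib_right mult_ac) (rule sum.swap)
  then show ?thesis
    by (simp add: inner_complex_vec matrix_vector_mult_def)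
qed

lemma sum_list_norm_kraus_mult_vec:
  assumes "(\<Sum>K\<leftarrow>Ks. cadj K ** K) = mat 1"
  shows "(\<Sum>K\<leftarrow>Ks. (norm (K *v v))\<^sup>2) = (norm v)\<^sup>2"
proof -
  have "(norm (K *v v))\<^sup>2 = inner v ((cadj K ** K) *v v)" for K
    by (simp add: power2_norm_eq_inner inner_cadj_mult_vec flip: matrix_vector_mul_assoc)
  moreover have "(\<Sum>K\<leftarrow>Ks. inner v ((cadj K ** K) *v v))
      = inner v ((\<Sum>K\<leftarrow>Ks. cadj K ** K) *v v)"
    by (induction Ks) (simp_all add: matrix_vector_mult_add_rdistrib inner_add_right)
  ultimately show ?thesis
    using assms by (simp add: power2_norm_eq_inner)
qed

lemma sum_list_mult_le_sqrt:
  fixes f g :: "'a \<Rightarrow> real"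
  shows "(\<Sum>x\<leftarrow>xs. f x * g x) \<le> sqrt (\<Sum>x\<leftarrow>xs. (f x)\<^sup>2) * sqrt (\<Sum>x\<leftarrow>xs. (g x)\<^sup>2)"
proof -
  have sum_list_eq: "(\<Sum>x\<leftarrow>xs. h x) = (\<Sum>i<length xs. h (xs ! i))" for h :: "'a \<Rightarrow> real"
    by (induction xs) (simp_all add: sum.lessThan_Suc_shift del: sum.lessThan_Suc)
  have "(\<Sum>x\<leftarrow>xs. f x * g x)\<^sup>2 \<le> (\<Sum>x\<leftarrow>xs. (f x)\<^sup>2) * (\<Sum>x\<leftarrow>xs. (g x)\<^sup>2)"
    unfolding sum_list_eq by (rule Cauchy_Schwarz_ineq_sum)
  then have "(\<Sum>x\<leftarrow>xs. f x * g x) \<le> sqrt ((\<Sum>x\<leftarrow>xs. (f x)\<^sup>2) * (\<Sum>x\<leftarrow>xs. (g x)\<^sup>2))"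
    by (rule real_le_rsqrt)
  then show ?thesis
    by (simp add: real_sqrt_mult)
qed

lemma op_norm_le_kraus_dual:
  assumes unital: "(\<Sum>K\<leftarrow>Ks. cadj K ** K) = mat 1" and A: "op_norm_le A c" and "c \<ge> 0"
  shows "op_norm_le (kraus_map (map cadj Ks) A) c"
  unfolding op_norm_le_def
proof
  fix v
  define w where "w = kraus_map (map cadj Ks) A *v v"
  have "kraus_map (map cadj Ks) A *v v = (\<Sum>K\<leftarrow>Ks. cadj K *v (A *v (K *v v)))"
    by (induction Ks)
      (simp_all add: matrix_vector_mult_add_rdistrib matrix_vector_mul_assoc matrix_mul_assoc)
  then have "(norm w)\<^sup>2 = inner w (\<Sum>K\<leftarrow>Ks. cadj K *v (A *v (K *v v)))"
    by (simp add: w_def power2_norm_eq_inner)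
  also have "\<dots> = (\<Sum>K\<leftarrow>Ks. inner (K *v w) (A *v (K *v v)))"
    by (induction Ks) (simp_all add: inner_add_right inner_cadj_mult_vec)
  also have "\<dots> \<le> (\<Sum>K\<leftarrow>Ks. norm (K *v w) * (c * norm (K *v v)))"
  proof (rule sum_list_mono)
    fix K
    have "inner (K *v w) (A *v (K *v v)) \<le> norm (K *v w) * norm (A *v (K *v v))"
      by (rule norm_cauchy_schwarz)
    also have "\<dots> \<le> norm (K *v w) * (c * norm (K *v v))"
      using A unfolding op_norm_le_def by (intro mult_left_mono) auto
    finally show "inner (K *v w) (A *v (K *v v)) \<le> norm (K *v w) * (c * norm (K *v v))" .
  qed
  also have "\<dots> = c * (\<Sum>K\<leftarrow>Ks. norm (K *v w) * norm (K *v v))"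
    by (simp add: sum_list_const_mult mult_ac)
  also have "\<dots> \<le> c * (norm w * norm v)"
    using sum_list_mult_le_sqrt[of "\<lambda>K. norm (K *v w)" "\<lambda>K. norm (K *v v)" Ks] \<open>c \<ge> 0\<close>
    by (intro mult_left_mono) (simp_all add: sum_list_norm_kraus_mult_vec[OF unital])
  finally have "norm w * norm w \<le> (c * norm v) * norm w"
    by (simp add: power2_eq_square mult_ac)
  then have "norm w \<le> c * norm v"
    using \<open>c \<ge> 0\<close> by (cases "w = 0") (simp_all add: mult_le_cancel_right_pos)
  then show "norm (kraus_map (map cadj Ks) A *v v) \<le> c * norm v"
    by (simp add: w_def)
qed

lemma norm_le_sum_norm_nth: "norm x \<le> (\<Sum>i\<in>UNIV. norm (x $ i))"
  by (simp add: norm_vec_def L2_set_le_sum)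

lemma norm_le_entrywise_l1: "norm A \<le> entrywise_l1 A"
proof -
  have "norm A \<le> (\<Sum>i\<in>UNIV. norm (A $ i))"
    by (rule norm_le_sum_norm_nth)
  also have "\<dots> \<le> entrywise_l1 A"
    unfolding entrywise_l1_def by (intro sum_mono norm_le_sum_norm_nth)
  finally show ?thesis .
qed

lemma entrywise_l1_le_norm: "entrywise_l1 A \<le> (real CARD('d))\<^sup>2 * norm (A :: 'd::finite cmat)"
proof -
  have "entrywise_l1 A \<le> (\<Sum>i\<in>(UNIV::'d set). \<Sum>j\<in>(UNIV::'d set). norm A)"
    unfolding entrywise_l1_def
    by (intro sum_mono) (meson Finite_Cartesian_Product.norm_nth_le order.trans)
  then show ?thesis
    by (simp add: power2_eq_square)
qed

lemma op_norm_le_entrywise_l1: "op_norm_le A (entrywise_l1 A)"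
  unfolding op_norm_le_def
proof
  fix v
  have "norm (A *v v) \<le> (\<Sum>i\<in>UNIV. norm ((A *v v) $ i))"
    by (rule norm_le_sum_norm_nth)
  also have "\<dots> \<le> (\<Sum>i\<in>UNIV. \<Sum>j\<in>UNIV. cmod (A $ i $ j) * norm v)"
  proof (rule sum_mono)
    fix i
    have "norm ((A *v v) $ i) \<le> (\<Sum>j\<in>UNIV. cmod (A $ i $ j) * cmod (v $ j))"
      unfolding matrix_vector_mult_def by (simp add: norm_mult order_trans[OF norm_sum])
    also have "\<dots> \<le> (\<Sum>j\<in>UNIV. cmod (A $ i $ j) * norm v)"
      by (intro sum_mono mult_left_mono) (auto simp: Finite_Cartesian_Product.norm_nth_le)
    finally show "norm ((A *v v) $ i) \<le> (\<Sum>j\<in>UNIV. cmod (A $ i $ j) * norm v)" .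
  qed
  also have "\<dots> = entrywise_l1 A * norm v"
    by (simp add: entrywise_l1_def sum_distrib_right)
  finally show "norm (A *v v) \<le> entrywise_l1 A * norm v" .
qed

lemma entrywise_l1_le_op_norm:
  assumes "op_norm_le (A :: 'd::finite cmat) c"
  shows "entrywise_l1 A \<le> (real CARD('d))\<^sup>2 * c"
proof -
  have "cmod (A $ i $ j) \<le> c" for i j
  proof -
    have "cmod (A $ i $ j) = cmod ((A *v axis j 1) $ i)"
      by (simp add: matrix_vector_mult_def axis_def if_distrib if_distribR sum.delta' cong: if_cong)
    also have "\<dots> \<le> norm (A *v axis j 1)"
      by (rule Finite_Cartesian_Product.norm_nth_le)
    also have "\<dots> \<le> c * norm (axis j (1::complex))"
      using assms unfolding op_norm_le_def by blast
    also have "norm (axis j (1::complex)) = 1"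
      by (rule norm_Basis) (auto simp: Basis_vec_def)
    finally show ?thesis
      by simp
  qed
  then have "entrywise_l1 A \<le> (\<Sum>i\<in>(UNIV::'d set). \<Sum>j\<in>(UNIV::'d set). c)"
    unfolding entrywise_l1_def by (intro sum_mono)
  then show ?thesis
    by (simp add: power2_eq_square)
qed

lemma norm_kraus_dual_funpow_le:
  assumes "(\<Sum>K\<leftarrow>Ks. cadj K ** K) = mat 1"
  shows "norm ((kraus_map (map cadj Ks) ^^ k) A) \<le> (real CARD('d))^4 * norm (A :: 'd::finite cmat)"
proof -
  have "op_norm_le ((kraus_map (map cadj Ks) ^^ k) A) (entrywise_l1 A)"
    by (induction k)
      (simp_all add: op_norm_le_entrywise_l1 op_norm_le_kraus_dual[OF assms] entrywise_l1_nonneg)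
  then have "norm ((kraus_map (map cadj Ks) ^^ k) A) \<le> (real CARD('d))\<^sup>2 * entrywise_l1 A"
    by (rule order.trans[OF norm_le_entrywise_l1 entrywise_l1_le_op_norm])
  also have "\<dots> \<le> (real CARD('d))\<^sup>2 * ((real CARD('d))\<^sup>2 * norm A)"
    by (intro mult_left_mono entrywise_l1_le_norm) auto
  finally show ?thesis
    by (simp add: power4_eq_xxxx power2_eq_square mult_ac)
qed

section \<open>Symmetric operators on Euclidean spaces\<close>

lemma linear_coeff_eq_0_if_quadratic_nonpos:
  fixes a b :: real
  assumes "\<And>t. 2 * t * a + t\<^sup>2 * b \<le> 0"
  shows "a = 0"
proof (rule ccontr)
  assume "a \<noteq> 0"
  define c where "c = \<bar>b\<bar> + 1"
  have "c > 0" "2 * c + b > 0"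
    by (auto simp: c_def)
  have "2 * (a / c) * a + (a / c)\<^sup>2 * b = a\<^sup>2 * (2 * c + b) / c\<^sup>2"
    using \<open>c > 0\<close> by (simp add: field_simps power2_eq_square)
  also have "\<dots> > 0"
    using \<open>a \<noteq> 0\<close> \<open>c > 0\<close> \<open>2 * c + b > 0\<close> by (intro divide_pos_pos mult_pos_pos) auto
  finally show False
    using assms[of "a / c"] by linarith
qed

lemma quadratic_form_attains_max_on_subspace:
  fixes S :: "'a::euclidean_space \<Rightarrow> 'a"
  assumes "linear S" "subspace W" "w \<in> W" "w \<noteq> 0"
  shows "\<exists>u\<in>W. norm u = 1 \<and> (\<forall>v\<in>W. inner v (S v) \<le> inner u (S u) * (norm v)\<^sup>2)"
proof -
  define K where "K = W \<inter> sphere 0 1"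
  have "bounded_linear S"
    using assms(1) linear_conv_bounded_linear by blast
  then have continuous: "continuous_on K (\<lambda>v. inner v (S v))"
    by (intro continuous_intros linear_continuous_on)
  have compact: "compact K"
    unfolding K_def using closed_Int_compact[OF closed_subspace[OF assms(2)] compact_sphere] .
  have "w /\<^sub>R norm w \<in> K"
    unfolding K_def using assms by (simp add: subspace_scale)
  then obtain u where "u \<in> K" and u_max: "\<And>v. v \<in> K \<Longrightarrow> inner v (S v) \<le> inner u (S u)"
    using compact_attains_sup[OF compact_continuous_image[OF continuous compact]] by fastforce
  have "inner v (S v) \<le> inner u (S u) * (norm v)\<^sup>2" if "v \<in> W" for v
  proof (cases "v = 0")
    case True
    then show ?thesis by (simp add: linear_0[OF assms(1)])
  next
    case False
    then have "v /\<^sub>R norm v \<in> K"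
      unfolding K_def using that assms(2) by (simp add: subspace_scale)
    then have "inner (v /\<^sub>R norm v) (S (v /\<^sub>R norm v)) \<le> inner u (S u)"
      by (rule u_max)
    then have "inner v (S v) / (norm v)\<^sup>2 \<le> inner u (S u)"
      by (simp add: linear_scale[OF assms(1)] power2_eq_square divide_inverse mult_ac)
    with False show ?thesis
      by (simp add: divide_le_eq mult.commute)
  qed
  moreover have "u \<in> W" "norm u = 1"
    using \<open>u \<in> K\<close> by (auto simp: K_def)
  ultimately show ?thesis
    by blast
qed

text \<open>The quadratic \<open>t \<mapsto> \<langle>u + t x, S (u + t x)\<rangle> - \<mu> \<parallel>u + t x\<parallel>\<^sup>2\<close> is nonpositive and
  vanishes at \<open>t = 0\<close>, so its linear coefficient \<open>2 \<langle>x, S u - \<mu> u\<rangle>\<close> is zero for every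
  \<open>x \<in> W\<close>; take \<open>x = S u - \<mu> u\<close>.\<close>

lemma max_quadratic_form_eigenvector:
  fixes S :: "'a::euclidean_space \<Rightarrow> 'a"
  assumes lin: "linear S" and sym: "\<And>x y. inner (S x) y = inner x (S y)"
    and W: "subspace W" "\<And>x. x \<in> W \<Longrightarrow> S x \<in> W"
    and u: "u \<in> W" "norm u = 1"
    and u_max: "\<And>v. v \<in> W \<Longrightarrow> inner v (S v) \<le> inner u (S u) * (norm v)\<^sup>2"
  shows "S u = inner u (S u) *\<^sub>R u"
proof -
  define \<mu> where "\<mu> = inner u (S u)"
  have orth: "inner x (S u - \<mu> *\<^sub>R u) = 0" if "x \<in> W" for x
  proof (rule linear_coeff_eq_0_if_quadratic_nonpos)
    fix t
    have "u + t *\<^sub>R x \<in> W"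
      using u(1) that W(1) by (simp add: subspace_add subspace_scale)
    then have "inner (u + t *\<^sub>R x) (S (u + t *\<^sub>R x)) \<le> \<mu> * (norm (u + t *\<^sub>R x))\<^sup>2"
      unfolding \<mu>_def by (rule u_max)
    moreover have "inner (u + t *\<^sub>R x) (S (u + t *\<^sub>R x))
        = \<mu> + 2 * t * inner x (S u) + t\<^sup>2 * inner x (S x)"
      using sym[of x u] by (simp add: linear_add[OF lin] linear_scale[OF lin] inner_add
          inner_commute \<mu>_def power2_eq_square algebra_simps)
    moreover have "(norm (u + t *\<^sub>R x))\<^sup>2 = 1 + 2 * t * inner x u + t\<^sup>2 * (norm x)\<^sup>2"
    proof -
      have "inner u u = 1"
        using u(2) by (metis power2_norm_eq_inner one_power2)
      then show ?thesis
        unfolding power2_norm_eq_inner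
        by (simp add: inner_add inner_commute power2_eq_square algebra_simps)
    qed
    ultimately show "2 * t * inner x (S u - \<mu> *\<^sub>R u) + t\<^sup>2 * (inner x (S x) - \<mu> * (norm x)\<^sup>2) \<le> 0"
      by (simp add: inner_diff_right algebra_simps)
  qed
  have "S u - \<mu> *\<^sub>R u \<in> W"
    using u(1) W by (simp add: subspace_diff subspace_scale)
  then have "inner (S u - \<mu> *\<^sub>R u) (S u - \<mu> *\<^sub>R u) = 0"
    by (rule orth)
  then show ?thesis
    by (simp add: \<mu>_def)
qed

lemma funpow_double_eigenvector:
  assumes "linear L" "L (L u) = c *\<^sub>R u"
  shows "(L ^^ (2 * k)) u = c ^ k *\<^sub>R u"
proof (induction k)
  case (Suc k)
  have "(L ^^ (2 * Suc k)) u = L (L ((L ^^ (2 * k)) u))"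
    by (simp add: funpow_swap1)
  also have "\<dots> = c ^ Suc k *\<^sub>R u"
    using Suc by (simp add: linear_scale[OF assms(1)] assms(2) mult.commute)
  finally show ?case .
qed simp

text \<open>If \<open>L\<^sup>2 u = \<lambda> u\<close> for the top eigenvalue \<open>\<lambda> = \<parallel>L u\<parallel>\<^sup>2\<close> of \<open>L\<^sup>2\<close>, then
  \<open>\<parallel>L\<^bsup>2k\<^esup> u\<parallel> = \<lambda>\<^sup>k\<close>, so power-boundedness forces \<open>\<lambda> \<le> 1\<close>.\<close>

lemma norm_le_if_symmetric_power_bounded:
  fixes L :: "'a::euclidean_space \<Rightarrow> 'a"
  assumes lin: "linear L" and sym: "\<And>x y. inner (L x) y = inner x (L y)"
    and bounded: "\<And>k v. norm ((L ^^ k) v) \<le> C * norm v"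
  shows "norm (L v) \<le> norm v"
proof -
  obtain b :: 'a where "b \<in> Basis"
    using nonempty_Basis by blast
  then have "b \<noteq> 0"
    by auto
  have lin2: "linear (L \<circ> L)"
    using lin by (simp add: linear_compose)
  have sym2: "\<And>x y. inner ((L \<circ> L) x) y = inner x ((L \<circ> L) y)"
    using sym by simp
  obtain u where "norm u = 1"
    and u_max: "\<And>v. inner v ((L \<circ> L) v) \<le> inner u ((L \<circ> L) u) * (norm v)\<^sup>2"
    using quadratic_form_attains_max_on_subspace[OF lin2 subspace_UNIV UNIV_I \<open>b \<noteq> 0\<close>] by blast
  define lam where "lam = inner u ((L \<circ> L) u)"
  have "(L \<circ> L) u = lam *\<^sub>R u"
    unfolding lam_def
    by (rule max_quadratic_form_eigenvector
        [OF lin2 sym2 subspace_UNIV UNIV_I UNIV_I \<open>norm u = 1\<close> u_max])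
  then have pow: "(L ^^ (2 * k)) u = lam ^ k *\<^sub>R u" for k
    by (intro funpow_double_eigenvector lin) simp
  have "lam \<le> 1"
  proof (rule ccontr)
    assume "\<not> lam \<le> 1"
    then obtain k where "C < lam ^ k"
      using real_arch_pow[of lam C] by auto
    moreover have "norm ((L ^^ (2 * k)) u) = lam ^ k"
      using pow[of k] \<open>norm u = 1\<close> \<open>\<not> lam \<le> 1\<close> by (simp add: abs_of_pos)
    ultimately show False
      using bounded[of "2 * k" u] \<open>norm u = 1\<close> by simp
  qed
  have "lam = inner (L u) (L u)"
    using sym[of u "L u"] by (simp add: lam_def)
  then have "lam \<ge> 0"
    by simp
  have "(norm (L v))\<^sup>2 = inner v ((L \<circ> L) v)"
    using sym[of v "L v"] by (simp add: power2_norm_eq_inner)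
  also have "\<dots> \<le> lam * (norm v)\<^sup>2"
    using u_max by (simp add: lam_def)
  also have "\<dots> \<le> (norm v)\<^sup>2"
    using \<open>lam \<le> 1\<close> \<open>lam \<ge> 0\<close> by (simp add: mult_left_le_one_le)
  finally have "(norm (L v))\<^sup>2 \<le> (norm v)\<^sup>2" .
  then show ?thesis
    by (simp add: power2_le_iff_abs_le)
qed

definition rayleigh :: "('a::real_inner \<Rightarrow> 'a) \<Rightarrow> 'a \<Rightarrow> real" where
  "rayleigh S u = inner u (S u) / (norm u)\<^sup>2"

lemma Sup_rayleigh_eq_max:
  assumes "u \<in> W" "norm u = 1"
    and u_max: "\<And>v. v \<in> W \<Longrightarrow> inner v (S v) \<le> inner u (S u) * (norm v)\<^sup>2"
  shows "Sup (rayleigh S ` (W - {0})) = inner u (S u)"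
proof (rule cSup_eq_maximum)
  show "inner u (S u) \<in> rayleigh S ` (W - {0})"
    using assms(1,2) by (intro image_eqI[of _ _ u]) (auto simp: rayleigh_def)
next
  fix x assume "x \<in> rayleigh S ` (W - {0})"
  then obtain v where "v \<in> W" "v \<noteq> 0" "x = rayleigh S v"
    by blast
  then show "x \<le> inner u (S u)"
    using u_max[of v] by (simp add: rayleigh_def divide_le_eq)
qed

lemma Sup_rayleigh_sandwich_le:
  fixes L N :: "'a::euclidean_space \<Rightarrow> 'a"
  assumes N: "linear N" "\<And>x y. inner (N x) y = inner x (N y)"
    and L: "\<And>x y. inner (L x) y = inner x (L y)" "\<And>v. norm (L v) \<le> norm v"
    and W: "subspace W" "\<And>x. x \<in> W \<Longrightarrow> N x \<in> W" "\<And>x. x \<in> W \<Longrightarrow> L x \<in> W"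
    and eigenvalues_nonneg: "\<And>u c. u \<in> W \<Longrightarrow> u \<noteq> 0 \<Longrightarrow> N u = c *\<^sub>R u \<Longrightarrow> 0 \<le> c"
  shows "Sup (rayleigh (L \<circ> N \<circ> L) ` (W - {0})) \<le> Sup (rayleigh N ` (W - {0}))"
proof (cases "W - {0} = {}")
  case False
  then obtain w where "w \<in> W" "w \<noteq> 0"
    by blast
  obtain u where u: "u \<in> W" "norm u = 1"
    and u_max: "\<And>v. v \<in> W \<Longrightarrow> inner v (N v) \<le> inner u (N u) * (norm v)\<^sup>2"
    using quadratic_form_attains_max_on_subspace[OF N(1) W(1) \<open>w \<in> W\<close> \<open>w \<noteq> 0\<close>] by blast
  define \<mu> where "\<mu> = inner u (N u)"
  have "u \<noteq> 0"
    using u(2) by auto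
  then have "0 \<le> \<mu>"
    using eigenvalues_nonneg[OF u(1) _ max_quadratic_form_eigenvector[OF N W(1,2) u u_max]]
    by (simp add: \<mu>_def)
  have "Sup (rayleigh N ` (W - {0})) = \<mu>"
    unfolding \<mu>_def using u u_max by (rule Sup_rayleigh_eq_max)
  moreover have "Sup (rayleigh (L \<circ> N \<circ> L) ` (W - {0})) \<le> \<mu>"
  proof (rule cSup_least)
    fix x assume "x \<in> rayleigh (L \<circ> N \<circ> L) ` (W - {0})"
    then obtain v where v: "v \<in> W" "v \<noteq> 0" and x: "x = rayleigh (L \<circ> N \<circ> L) v"
      by blast
    have "inner v (L (N (L v))) = inner (L v) (N (L v))"
      by (simp add: L(1))
    also have "\<dots> \<le> \<mu> * (norm (L v))\<^sup>2"
      using u_max[OF W(3)[OF v(1)]] by (simp add: \<mu>_def)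
    also have "\<dots> \<le> \<mu> * (norm v)\<^sup>2"
      using L(2)[of v] \<open>0 \<le> \<mu>\<close> by (intro mult_left_mono power_mono) auto
    finally show "x \<le> \<mu>"
      using v(2) by (simp add: x rayleigh_def divide_le_eq)
  qed (use False in blast)
  ultimately show ?thesis
    by simp
next
  case True
  then show ?thesis
    by (simp only: True image_empty order_refl)
qed

section \<open>The Hilbert--Schmidt picture of the s-inner product\<close>

locale gibbs_frame =
  fixes H :: "'d::finite cmat" and \<beta> s :: real
  assumes hermitian: "hermitian H"
begin

definition expH :: "real \<Rightarrow> 'd cmat" where
  "expH r = mexp (csmult (of_real r) H)"

lemma expH_add: "expH a ** expH b = expH (a + b)"
  unfolding expH_def by (simp add: mexp_csmult_add)

lemma expH_0: "expH 0 = mat 1"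
  unfolding expH_def using mexp_csmult_0 by simp

lemma expH_uminus_cancel: "expH (- r) ** expH r = mat 1" "expH r ** expH (- r) = mat 1"
  by (simp_all add: expH_add expH_0)

lemma cadj_expH: "cadj (expH r) = expH r"
  unfolding expH_def using cadj_mexp_of_real[OF hermitian] .

definition Z :: real where
  "Z = Re (partition_fn H \<beta>)"

lemma Z_pos: "Z > 0"
proof -
  have "partition_fn H \<beta> = trace (expH (- \<beta>))"
    by (simp add: partition_fn_def expH_def)
  also have "expH (- \<beta>) = cadj (expH (- \<beta> / 2)) ** expH (- \<beta> / 2)"
    by (simp add: cadj_expH expH_add)
  finally have "partition_fn H \<beta> = hs_inner (expH (- \<beta> / 2)) (expH (- \<beta> / 2))"
    by (simp add: hs_inner_def)
  moreover have "expH (- \<beta> / 2) \<noteq> 0"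
    using expH_uminus_cancel(2)[of "- \<beta> / 2"] mat_1_neq_0 by force
  ultimately show ?thesis
    by (simp add: Z_def hs_inner_self)
qed

lemma gibbs_pow_eq:
  "gibbs_pow H \<beta> t = csmult (of_real (1 / Z powr t)) (expH (- (t * \<beta> / 2)) ** expH (- (t * \<beta> / 2)))"
proof -
  have "expH (- (t * \<beta> / 2)) ** expH (- (t * \<beta> / 2)) = expH (- t * \<beta>)"
    unfolding expH_add by (rule arg_cong[where f = expH]) simp
  moreover have "gibbs_pow H \<beta> t = csmult (of_real (1 / Z powr t)) (expH (- t * \<beta>))"
    unfolding gibbs_pow_def expH_def Z_def ..
  ultimately show ?thesis
    by simp
qed

text \<open>\<open>J X\<close> is \<open>\<rho>\<^bsup>(1-s)/2\<^esup> X \<rho>\<^bsup>s/2\<^esup>\<close> up to a positive scalar.\<close>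

definition J :: "'d cmat \<Rightarrow> 'd cmat" where
  "J X = expH (- ((1 - s) * \<beta> / 2)) ** X ** expH (- (s * \<beta> / 2))"

definition J_inv :: "'d cmat \<Rightarrow> 'd cmat" where
  "J_inv X = expH ((1 - s) * \<beta> / 2) ** X ** expH (s * \<beta> / 2)"

lemma J_J_inv [simp]: "J (J_inv X) = X"
proof -
  have "J (J_inv X) = (expH (- ((1 - s) * \<beta> / 2)) ** expH ((1 - s) * \<beta> / 2)) ** X
      ** (expH (s * \<beta> / 2) ** expH (- (s * \<beta> / 2)))"
    unfolding J_def J_inv_def by (simp only: matrix_mul_assoc)
  then show ?thesis
    by (simp only: expH_uminus_cancel matrix_mul_lid matrix_mul_rid)
qed

lemma J_inv_J [simp]: "J_inv (J X) = X"
proof -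
  have "J_inv (J X) = (expH ((1 - s) * \<beta> / 2) ** expH (- ((1 - s) * \<beta> / 2))) ** X
      ** (expH (- (s * \<beta> / 2)) ** expH (s * \<beta> / 2))"
    unfolding J_def J_inv_def by (simp only: matrix_mul_assoc)
  then show ?thesis
    by (simp only: expH_uminus_cancel matrix_mul_lid matrix_mul_rid)
qed

lemma linear_J: "linear J"
  by (rule linearI) (simp_all add: J_def matrix_add_ldistrib matrix_add_rdistrib
      matrix_scalar_ac flip: scalar_matrix_assoc)

lemma linear_J_inv: "linear J_inv"
  by (rule linearI) (simp_all add: J_inv_def matrix_add_ldistrib matrix_add_rdistrib
      matrix_scalar_ac flip: scalar_matrix_assoc)

lemma J_csmult: "J (csmult c X) = csmult c (J X)"
  by (simp add: J_def csmult_mult_left csmult_mult_right)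

lemma s_inner_eq_hs_inner: "s_inner H \<beta> s X Y = of_real (1 / Z) * hs_inner (J X) (J Y)"
proof -
  define A B where "A = expH (- ((1 - s) * \<beta> / 2))" and "B = expH (- (s * \<beta> / 2))"
  have "1 / Z powr (1 - s) * (1 / Z powr s) = 1 / Z"
    using Z_pos by (simp flip: powr_add)
  then have scalar:
      "of_real (1 / Z powr (1 - s)) * of_real (1 / Z powr s) = (of_real (1 / Z) :: complex)"
    by (simp only: of_real_mult [symmetric])
  have "s_inner H \<beta> s X Y
      = of_real (1 / Z powr (1 - s)) * of_real (1 / Z powr s)
          * trace (cadj X ** A ** A ** Y ** B ** B)"
    unfolding s_inner_def gibbs_pow_eq A_def B_def
    by (simp add: csmult_mult_left csmult_mult_right trace_csmult matrix_mul_assoc)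
  also have "trace (cadj X ** A ** A ** Y ** B ** B) = trace (B ** (cadj X ** A ** A ** Y ** B))"
    by (rule trace_mul_sym)
  also have "\<dots> = hs_inner (J X) (J Y)"
    unfolding hs_inner_def J_def A_def[symmetric] B_def[symmetric]
    by (simp add: cadj_mult A_def B_def cadj_expH matrix_mul_assoc)
  finally show ?thesis
    by (simp only: scalar)
qed

definition transported_dual :: "('d cmat \<Rightarrow> 'd cmat) \<Rightarrow> 'd cmat \<Rightarrow> 'd cmat" where
  "transported_dual T u = J (dual T (J_inv u))"

text \<open>The complex constraint \<open>\<langle>X, I\<rangle>\<^sub>s = 0\<close> amounts to two real orthogonality
  conditions on \<open>J X\<close>, one for the real and one for the imaginary part.\<close>

definition centered :: "'d cmat set" where
  "centered = {u. inner u (J (mat 1)) = 0 \<and> inner u (J (csmult \<i> (mat 1))) = 0}"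

lemma subspace_centered: "subspace centered"
  unfolding subspace_def centered_def by (simp add: inner_add_left)

lemma s_inner_mat_1_eq_0_iff: "s_inner H \<beta> s X (mat 1) = 0 \<longleftrightarrow> J X \<in> centered"
proof -
  have "s_inner H \<beta> s X (mat 1) = 0 \<longleftrightarrow> hs_inner (J X) (J (mat 1)) = 0"
    using Z_pos by (simp add: s_inner_eq_hs_inner)
  also have "\<dots> \<longleftrightarrow> Re (hs_inner (J X) (J (mat 1))) = 0 \<and> Im (hs_inner (J X) (J (mat 1))) = 0"
    by (simp add: complex_eq_iff)
  also have "Im (hs_inner (J X) (J (mat 1))) = - Re (hs_inner (J X) (J (csmult \<i> (mat 1))))"
    by (simp add: J_csmult hs_inner_csmult_right)
  finally show ?thesis
    by (simp add: centered_def Re_hs_inner)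
qed

lemma rayleigh_transported_dual:
  "Re (s_inner H \<beta> s X (dual T X) / s_inner H \<beta> s X X) = rayleigh (transported_dual T) (J X)"
  using Z_pos
  by (simp add: s_inner_eq_hs_inner transported_dual_def hs_inner_self rayleigh_def
      flip: Re_hs_inner)

lemma gap_eq_Sup_rayleigh:
  "gap H \<beta> s T = 1 - Sup (rayleigh (transported_dual T) ` (centered - {0}))"
proof -
  have J_eq_0_iff: "J X = 0 \<longleftrightarrow> X = 0" for X
    by (metis J_inv_J linear_0[OF linear_J])
  have "{Re (s_inner H \<beta> s X (dual T X) / s_inner H \<beta> s X X) | X.
          X \<noteq> 0 \<and> s_inner H \<beta> s X (mat 1) = 0}
      = (\<lambda>X. rayleigh (transported_dual T) (J X)) ` {X. J X \<in> centered - {0}}"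
    by (auto simp: rayleigh_transported_dual s_inner_mat_1_eq_0_iff J_eq_0_iff)
  also have "{X. J X \<in> centered - {0}} = J_inv ` (centered - {0})"
    by (auto simp: image_iff) (metis DiffI J_inv_J singletonD)
  also have "(\<lambda>X. rayleigh (transported_dual T) (J X)) ` \<dots>
      = rayleigh (transported_dual T) ` (centered - {0})"
    by (simp add: image_image)
  finally show ?thesis
    by (simp add: gap_def)
qed

lemma linear_transported_dual:
  assumes "quantum_channel T"
  shows "linear (transported_dual T)"
proof -
  obtain Ks where "dual T = kraus_map (map cadj Ks)"
    using quantum_channel_dual[OF assms] by blast
  then have "transported_dual T = J \<circ> kraus_map (map cadj Ks) \<circ> J_inv"
    by (simp add: fun_eq_iff transported_dual_def)
  then show ?thesis
    by (simp add: linear_compose linear_J linear_J_inv linear_kraus_map)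
qed

lemma transported_dual_symmetric:
  assumes "detailed_balance H \<beta> s T"
  shows "inner (transported_dual T x) y = inner x (transported_dual T y)"
proof -
  have "s_inner H \<beta> s (J_inv x) (dual T (J_inv y)) = s_inner H \<beta> s (dual T (J_inv x)) (J_inv y)"
    using assms unfolding detailed_balance_def by blast
  then have "hs_inner x (transported_dual T y) = hs_inner (transported_dual T x) y"
    using Z_pos by (simp add: s_inner_eq_hs_inner transported_dual_def)
  then show ?thesis
    by (metis Re_hs_inner)
qed

lemma transported_dual_centered:
  assumes "quantum_channel T" "detailed_balance H \<beta> s T" "u \<in> centered"
  shows "transported_dual T u \<in> centered"
proof -
  obtain Ks where "dual T = kraus_map (map cadj Ks)" "(\<Sum>K\<leftarrow>Ks. cadj K ** K) = mat 1"
    using quantum_channel_dual[OF assms(1)] by blast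
  then have "transported_dual T (J (mat 1)) = J (mat 1)"
    "transported_dual T (J (csmult \<i> (mat 1))) = J (csmult \<i> (mat 1))"
    by (simp_all add: transported_dual_def kraus_map_csmult kraus_map_adjoints_unital)
  with assms(3) show ?thesis
    by (simp add: centered_def transported_dual_symmetric[OF assms(2)])
qed

lemma transported_dual_comp3:
  assumes "quantum_channel M" "quantum_channel N"
  shows "transported_dual (M \<circ> N \<circ> M)
    = transported_dual M \<circ> transported_dual N \<circ> transported_dual M"
  by (simp add: fun_eq_iff transported_dual_def dual_comp3[OF assms])

lemma norm_transported_dual_le:
  assumes "quantum_channel T" "detailed_balance H \<beta> s T"
  shows "norm (transported_dual T v) \<le> norm v"
proof -
  obtain Ks where dual_T: "dual T = kraus_map (map cadj Ks)"
    and unital: "(\<Sum>K\<leftarrow>Ks. cadj K ** K) = mat 1"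
    using quantum_channel_dual[OF assms(1)] by blast
  obtain CJ where CJ: "CJ > 0" "\<And>x. norm (J x) \<le> norm x * CJ"
    using linear_J linear_conv_bounded_linear bounded_linear.pos_bounded by blast
  obtain CJ' where CJ': "CJ' > 0" "\<And>x. norm (J_inv x) \<le> norm x * CJ'"
    using linear_J_inv linear_conv_bounded_linear bounded_linear.pos_bounded by blast
  have "norm ((transported_dual T ^^ k) x) \<le> ((real CARD('d))^4 * CJ' * CJ) * norm x" for k x
  proof -
    have "(transported_dual T ^^ k) x = J ((dual T ^^ k) (J_inv x))"
      by (induction k) (simp_all add: transported_dual_def)
    then have "norm ((transported_dual T ^^ k) x) \<le> norm ((dual T ^^ k) (J_inv x)) * CJ"
      by (simp add: CJ(2))
    also have "\<dots> \<le> ((real CARD('d))^4 * (norm x * CJ')) * CJ"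
      using norm_kraus_dual_funpow_le[OF unital, of k "J_inv x"] CJ CJ'
      by (intro mult_right_mono) (auto simp: dual_T intro: order.trans mult_left_mono)
    finally show ?thesis
      by (simp add: mult_ac)
  qed
  then show ?thesis
    by (rule norm_le_if_symmetric_power_bounded[OF linear_transported_dual[OF assms(1)]
          transported_dual_symmetric[OF assms(2)]])
qed

lemma transported_dual_eigenvalue_nonneg:
  assumes T: "quantum_channel T" and spectrum: "spectrum_map T \<subseteq> complex_of_real ` {0..1}"
    and "u \<noteq> 0" and eigen: "transported_dual T u = c *\<^sub>R u"
  shows "0 \<le> c"
proof -
  have "dual T (J_inv u) = J_inv (c *\<^sub>R u)"
    using eigen by (metis J_inv_J transported_dual_def)
  then have "dual T (J_inv u) = csmult (of_real c) (J_inv u)"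
    by (simp add: linear_scale[OF linear_J_inv] csmult_of_real)
  moreover have "J_inv u \<noteq> 0"
    using \<open>u \<noteq> 0\<close> by (metis J_J_inv linear_0[OF linear_J])
  ultimately have "cnj (of_real c) \<in> spectrum_map T"
    by (rule cnj_in_spectrum_map_if_dual_eigenvector[OF T])
  with spectrum show ?thesis
    by auto
qed

end

theorem lemma4p2:
  fixes H :: "complex^'d^'d" and n :: nat and \<beta> s :: real
    and \<M> \<N> :: "complex^'d^'d \<Rightarrow> complex^'d^'d"
  assumes "CARD('d) = 2 ^ n"
    and "hermitian H"
    and "\<beta> > 0"
    and "0 \<le> s" and "s \<le> 1"
    and "quantum_channel \<M>" and "quantum_channel \<N>"
    and "detailed_balance H \<beta> s \<M>" and "detailed_balance H \<beta> s \<N>"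
    and "unique_fixed_point \<N> (gibbs H \<beta>)"
    and "spectrum_map \<N> \<subseteq> complex_of_real ` {0..1}"
  shows "gap H \<beta> s (\<M> \<circ> \<N> \<circ> \<M>) \<ge> gap H \<beta> s \<N>"
proof -
  interpret gibbs_frame H \<beta> s
    using \<open>hermitian H\<close> by unfold_locales
  note M = \<open>quantum_channel \<M>\<close> \<open>detailed_balance H \<beta> s \<M>\<close>
    and N = \<open>quantum_channel \<N>\<close> \<open>detailed_balance H \<beta> s \<N>\<close>
  have "Sup (rayleigh (transported_dual \<M> \<circ> transported_dual \<N> \<circ> transported_dual \<M>)
            ` (centered - {0}))
        \<le> Sup (rayleigh (transported_dual \<N>) ` (centered - {0}))"
    by (rule Sup_rayleigh_sandwich_le[OF linear_transported_dual[OF N(1)]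
          transported_dual_symmetric[OF N(2)] transported_dual_symmetric[OF M(2)]
          norm_transported_dual_le[OF M] subspace_centered transported_dual_centered[OF N]
          transported_dual_centered[OF M] transported_dual_eigenvalue_nonneg[OF N(1)
            \<open>spectrum_map \<N> \<subseteq> complex_of_real ` {0..1}\<close>]])
  then show ?thesis
    by (simp add: gap_eq_Sup_rayleigh transported_dual_comp3[OF M(1) N(1)])
qed

end
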